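(* Consider the following iterative random process on populations (clades) of finite surreal forms, starting from an initial finite clade. Each new clade of size $n$ is produced from the previous clade $\mathcal{C}$ by creating each member independently as follows: draw $n_p\sim\mathrm{Poisson}(\lambda)$ with $\lambda>0$; select $n_p$ surreal forms from $\mathcal{C}$, each independently with probability proportional to $w_{g(x)}$; sort them into an ordered list $P$; choose a split point $s\in\{0,\dots,n_p\}$ from a split distribution $D_s(n_p)$; set $x=\{X_L\mid X_R\}$ with $X_L=\{P[1],\dots,P[s]\}$, $X_R=\{P[s+1],\dots,P[n_p]\}$. Here the weighting is $w_k=f_k/g_k$ whenever $g_k>0$ and $w_k=0$ whenever $g_k=0$, where $g_k$ is the proportion of members of the current clade $\mathcal{C}$ with generation $k$, and $f_k=\alpha^k$ with $\alpha\in(0,1)$. Then the long-term generation distribution of the clades has PMF $$\Pr[g(x)=k]=\begin{cases} e^{-\lambda}, & k=0,\\ e^{-\lambda\alpha^{k}}-e^{-\lambda\alpha^{k-1}}, & k\ge1,\end{cases}$$ equivalently CDF $\Pr[g(x)\le k]=e^{-\lambda\alpha^k}$.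
   Context: A (short) surreal form is $x=\{X_L\mid X_R\}$ where $X_L,X_R$ are finite (possibly empty) sets of previously constructed surreal forms such that no element of $X_R$ is $\le$ any element of $X_L$; the base form is $\bar 0=\{\emptyset\mid\emptyset\}$. The elements of $X_L\cup X_R$ are the parents of $x$. The generation is defined by $g(\bar 0)=0$ and $g(x)=1+\max_{p\in X_L\cup X_R} g(p)$.
   Formalization: Clades of size n are replaced by a deterministic iteration: the proportions $g_k$ of each new clade equal the law of a new member's generation given the previous clade's proportions, and the stated PMF is their pointwise limit. Apart from conventions, each condition added here is assumed in the paper as well or is needed for the statement above to hold. *)

theory Defs
  imports "HOL-Probability.Probability"
begin

text \<open>Generation-level model of the clade process (infinite-population / mean-field reading).
  A clade is represented by its generation distribution G (g_k = pmf G k).\<close>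

definition gen_weight :: "real \<Rightarrow> nat pmf \<Rightarrow> nat \<Rightarrow> real" where
  "gen_weight \<alpha> G k = (if pmf G k > 0 then \<alpha> ^ k / pmf G k else 0)"

text \<open>Law of the generation of one selected parent: a member is chosen with probability
  proportional to w of its generation, so generation k is chosen with probability
  proportional to w_k * g_k.\<close>
definition parent_gen_pmf :: "real \<Rightarrow> nat pmf \<Rightarrow> nat pmf" where
  "parent_gen_pmf \<alpha> G =
     embed_pmf (\<lambda>k. gen_weight \<alpha> G k * pmf G k / (\<Sum>\<^sub>\<infinity>j. gen_weight \<alpha> G j * pmf G j))"

text \<open>Generation of a newly created member: n_p ~ Poisson(lambda) parents drawn
  independently; g(x) = 0 if there are no parents, otherwise 1 + max parent generation
  (the split point and sorting do not affect the generation).\<close>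
definition new_member_gen :: "real \<Rightarrow> real \<Rightarrow> nat pmf \<Rightarrow> nat pmf" where
  "new_member_gen rate \<alpha> G =
     do { np \<leftarrow> poisson_pmf rate;
          ps \<leftarrow> replicate_pmf np (parent_gen_pmf \<alpha> G);
          return_pmf (if ps = [] then 0 else Suc (Max (set ps))) }"

definition clade_gen :: "real \<Rightarrow> real \<Rightarrow> nat pmf \<Rightarrow> nat \<Rightarrow> nat pmf" where
  "clade_gen rate \<alpha> G0 n = (new_member_gen rate \<alpha> ^^ n) G0"

definition limit_gen_pmf :: "real \<Rightarrow> real \<Rightarrow> nat \<Rightarrow> real" where
  "limit_gen_pmf rate \<alpha> k =
     (if k = 0 then exp (- rate) else exp (- rate * \<alpha> ^ k) - exp (- rate * \<alpha> ^ (k - 1)))"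

end

theory Submission
  imports Defs
begin

text \<open>With the weights \<open>\<alpha>\<^sup>k / g\<^sub>k\<close> a parent has
  generation \<open>k\<close> with probability \<open>\<alpha>\<^sup>k / Z\<close>, where \<open>Z\<close> (\<open>support_weight\<close>) sums \<open>\<alpha>\<^sup>j\<close> over the
  generations present in the clade. A new member has generation \<open>\<le> k\<close> iff all of its
  \<open>Poisson(\<lambda>)\<close> many parents have generation \<open>< k\<close>, so by the Poisson generating
  function its CDF at \<open>k\<close> is \<open>exp (-\<lambda> (1 - F(k)))\<close> with \<open>F(k)\<close> the parents'
  probability of generation \<open>< k\<close>. The \<open>n\<close>-th clade contains every generation \<open>< n\<close>,
  hence \<open>Z \<longrightarrow> 1 / (1 - \<alpha>)\<close>, \<open>1 - F(k) \<longrightarrow> \<alpha>\<^sup>k\<close>, and the CDF tends to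
  \<open>exp (-\<lambda> \<alpha>\<^sup>k)\<close>.\<close>

lemma measure_bind_pmf:
  "measure_pmf.prob (bind_pmf M f) A = (\<integral>x. measure_pmf.prob (f x) A \<partial>measure_pmf M)"
  unfolding measure_pmf_bind
  by (rule measure_pmf.measure_bind[where N="count_space UNIV"])
     (auto simp: measurable_measure_pmf measure_pmf_in_subprob_algebra)

lemma measure_replicate_pmf_lists:
  "measure_pmf.prob (replicate_pmf n P) (lists A) = measure_pmf.prob P A ^ n"
proof (induction n)
  case 0
  then show ?case by simp
next
  case (Suc n)
  have "(#) x -` lists A = (if x \<in> A then lists A else {})" for x
    by auto
  then have "measure_pmf.prob (map_pmf ((#) x) (replicate_pmf n P)) (lists A)
      = indicator A x * measure_pmf.prob P A ^ n" for x
    using Suc.IH by (simp add: indicator_def)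
  then show ?case
    by (simp add: measure_bind_pmf map_pmf_def[symmetric])
qed

lemma integral_poisson_power:
  fixes x :: real
  assumes "0 < rate"
  shows "(\<integral>n. x ^ n \<partial>measure_pmf (poisson_pmf rate)) = exp (- rate * (1 - x))"
proof -
  have pmf_times_power: "pmf (poisson_pmf rate) n * y ^ n = exp (- rate) * ((rate * y) ^ n /\<^sub>R fact n)"
    for n and y :: real
    using assms by (simp add: power_mult_distrib divide_inverse)
  have sums: "(\<lambda>n. pmf (poisson_pmf rate) n * y ^ n) sums (exp (- rate) * exp (rate * y))" for y :: real
    unfolding pmf_times_power by (intro sums_mult exp_converges)
  have "integrable (count_space UNIV) (\<lambda>n. pmf (poisson_pmf rate) n * x ^ n)"
    unfolding integrable_count_space_nat_iff
    using sums[of "\<bar>x\<bar>"] by (simp add: abs_mult power_abs sums_summable)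
  then have "(\<integral>n. x ^ n \<partial>measure_pmf (poisson_pmf rate)) = (\<Sum>n. pmf (poisson_pmf rate) n * x ^ n)"
    unfolding measure_pmf_eq_density by (simp add: integral_density integral_count_space_nat)
  also have "\<dots> = exp (- rate) * exp (rate * x)"
    using sums[of x] by (simp add: sums_iff)
  also have "\<dots> = exp (- rate * (1 - x))"
    by (simp add: mult_exp_exp algebra_simps)
  finally show ?thesis .
qed

lemma pmf_eq_measure_atMost_diff_lessThan:
  fixes M :: "'a::linorder pmf"
  shows "pmf M k = measure_pmf.prob M {..k} - measure_pmf.prob M {..<k}"
proof -
  have "{..k} = {k} \<union> {..<k}"
    by auto
  then show ?thesis
    by (simp add: measure_pmf.finite_measure_Union[where A="{k}" and B="{..<k}"] measure_pmf_single del: Un_insert_left)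
qed

definition support_weight :: "real \<Rightarrow> nat pmf \<Rightarrow> real" where
  "support_weight \<alpha> G = (\<Sum>j\<in>set_pmf G. \<alpha> ^ j)"

lemma support_weight_pos:
  assumes "finite (set_pmf G)" and "0 < \<alpha>"
  shows "0 < support_weight \<alpha> G"
  unfolding support_weight_def using assms set_pmf_not_empty[of G]
  by (intro sum_pos) auto

lemma pmf_parent_gen_pmf:
  assumes fin: "finite (set_pmf G)" and "0 < \<alpha>"
  shows "pmf (parent_gen_pmf \<alpha> G) k = (if k \<in> set_pmf G then \<alpha> ^ k / support_weight \<alpha> G else 0)"
proof -
  define f where "f k = (if k \<in> set_pmf G then \<alpha> ^ k / support_weight \<alpha> G else 0)" for k
  have Z_pos: "0 < support_weight \<alpha> G"
    using support_weight_pos assms by blast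
  have weighted: "gen_weight \<alpha> G j * pmf G j = (if j \<in> set_pmf G then \<alpha> ^ j else 0)" for j
    using pmf_nonneg[of G j] by (auto simp: gen_weight_def set_pmf_iff)
  have "(\<Sum>\<^sub>\<infinity>j. gen_weight \<alpha> G j * pmf G j) = (\<Sum>\<^sub>\<infinity>j\<in>set_pmf G. \<alpha> ^ j)"
    unfolding weighted by (rule infsum_cong_neutral) auto
  also have "\<dots> = support_weight \<alpha> G"
    using fin by (simp add: support_weight_def)
  finally have Z: "(\<Sum>\<^sub>\<infinity>j. gen_weight \<alpha> G j * pmf G j) = support_weight \<alpha> G" .
  have "parent_gen_pmf \<alpha> G = embed_pmf f"
    unfolding parent_gen_pmf_def Z unfolding weighted f_def by (rule arg_cong[where f=embed_pmf]) auto
  moreover have f_nonneg: "0 \<le> f x" for x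
    using assms Z_pos by (auto simp: f_def)
  moreover have "(\<integral>\<^sup>+x. f x \<partial>count_space UNIV) = 1"
  proof -
    have "(\<integral>\<^sup>+x. f x \<partial>count_space UNIV) = (\<Sum>x\<in>set_pmf G. ennreal (f x))"
      by (rule nn_integral_count_space'[OF fin]) (auto simp: f_def)
    also have "\<dots> = ennreal (\<Sum>x\<in>set_pmf G. f x)"
      using f_nonneg by (simp add: sum_ennreal)
    also have "(\<Sum>x\<in>set_pmf G. f x) = 1"
      using Z_pos by (simp add: f_def support_weight_def sum_divide_distrib[symmetric])
    finally show ?thesis
      by simp
  qed
  ultimately show ?thesis
    using pmf_embed_pmf[of f] f_def by auto
qed

lemma set_pmf_parent_gen_pmf:
  assumes "finite (set_pmf G)" and "0 < \<alpha>"
  shows "set_pmf (parent_gen_pmf \<alpha> G) = set_pmf G"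
  using pmf_parent_gen_pmf[OF assms] support_weight_pos[OF assms] assms(2)
  by (auto simp: set_pmf_iff)

lemma measure_parent_gen_pmf_lessThan:
  assumes "finite (set_pmf G)" and "0 < \<alpha>" and "{..<k} \<subseteq> set_pmf G"
  shows "measure_pmf.prob (parent_gen_pmf \<alpha> G) {..<k} = (\<Sum>j<k. \<alpha> ^ j) / support_weight \<alpha> G"
  using assms
  by (simp add: measure_measure_pmf_finite pmf_parent_gen_pmf sum_divide_distrib subset_iff)

lemma support_weight_tendsto:
  assumes "\<And>n. finite (set_pmf (G n))" and "\<And>n. {..<n} \<subseteq> set_pmf (G n)"
    and "0 < \<alpha>" and "\<alpha> < 1"
  shows "(\<lambda>n. support_weight \<alpha> (G n)) \<longlonglongrightarrow> 1 / (1 - \<alpha>)"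
proof (rule tendsto_sandwich)
  show "\<forall>\<^sub>F n in sequentially. (\<Sum>j<n. \<alpha> ^ j) \<le> support_weight \<alpha> (G n)"
    unfolding support_weight_def using assms
    by (intro always_eventually allI sum_mono2) auto
  have "summable (\<lambda>j. \<alpha> ^ j)"
    using assms by (intro summable_geometric) auto
  then have "support_weight \<alpha> (G n) \<le> (\<Sum>j. \<alpha> ^ j)" for n
    unfolding support_weight_def using assms by (intro sum_le_suminf) auto
  then show "\<forall>\<^sub>F n in sequentially. support_weight \<alpha> (G n) \<le> 1 / (1 - \<alpha>)"
    using assms by (simp add: suminf_geometric)
  show "(\<lambda>n. \<Sum>j<n. \<alpha> ^ j) \<longlonglongrightarrow> 1 / (1 - \<alpha>)"
    using geometric_sums[of \<alpha>] assms by (simp add: sums_def)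
qed simp

lemma measure_parent_gen_pmf_lessThan_tendsto:
  assumes fin: "\<And>n. finite (set_pmf (G n))" and exhaust: "\<And>n. {..<n} \<subseteq> set_pmf (G n)"
    and "0 < \<alpha>" and "\<alpha> < 1"
  shows "(\<lambda>n. measure_pmf.prob (parent_gen_pmf \<alpha> (G n)) {..<k}) \<longlonglongrightarrow> 1 - \<alpha> ^ k"
proof -
  have "\<forall>\<^sub>F n in sequentially. (\<Sum>j<k. \<alpha> ^ j) / support_weight \<alpha> (G n)
      = measure_pmf.prob (parent_gen_pmf \<alpha> (G n)) {..<k}"
    using eventually_ge_at_top[of k]
  proof eventually_elim
    case (elim n)
    then have "{..<k} \<subseteq> set_pmf (G n)"
      using exhaust[of n] by auto
    then show ?case
      using fin assms by (simp add: measure_parent_gen_pmf_lessThan)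
  qed
  moreover have "(\<lambda>n. (\<Sum>j<k. \<alpha> ^ j) / support_weight \<alpha> (G n)) \<longlonglongrightarrow> (\<Sum>j<k. \<alpha> ^ j) / (1 / (1 - \<alpha>))"
    using assms by (intro tendsto_intros support_weight_tendsto) auto
  moreover have "(\<Sum>j<k. \<alpha> ^ j) / (1 / (1 - \<alpha>)) = 1 - \<alpha> ^ k"
    using assms by (simp add: sum_gp_strict)
  ultimately show ?thesis
    using Lim_transform_eventually by fastforce
qed

definition gen_of_parents :: "nat list \<Rightarrow> nat" where
  "gen_of_parents ps = (if ps = [] then 0 else Suc (Max (set ps)))"

lemma vimage_gen_of_parents_atMost: "gen_of_parents -` {..k} = lists {..<k}"
  by (auto simp: gen_of_parents_def Suc_le_eq Max_less_iff lists_eq_set split: if_splits)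

lemma new_member_gen_eq:
  "new_member_gen rate \<alpha> G
     = bind_pmf (poisson_pmf rate) (\<lambda>np. map_pmf gen_of_parents (replicate_pmf np (parent_gen_pmf \<alpha> G)))"
  unfolding new_member_gen_def map_pmf_def gen_of_parents_def by simp

lemma measure_new_member_gen_atMost:
  assumes "0 < rate"
  shows "measure_pmf.prob (new_member_gen rate \<alpha> G) {..k}
     = exp (- rate * (1 - measure_pmf.prob (parent_gen_pmf \<alpha> G) {..<k}))"
  unfolding new_member_gen_eq measure_bind_pmf measure_map_pmf vimage_gen_of_parents_atMost
    measure_replicate_pmf_lists integral_poisson_power[OF assms] ..

lemma set_pmf_new_member_gen:
  assumes "0 < rate"
  shows "set_pmf (new_member_gen rate \<alpha> G) = insert 0 (Suc ` set_pmf (parent_gen_pmf \<alpha> G))"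
proof -
  let ?P = "parent_gen_pmf \<alpha> G"
  have "set_pmf (new_member_gen rate \<alpha> G) = gen_of_parents ` lists (set_pmf ?P)"
    unfolding new_member_gen_eq using assms by (auto simp: set_replicate_pmf)
  also have "\<dots> = insert 0 (Suc ` set_pmf ?P)"
  proof (intro equalityI subsetI)
    fix y
    assume "y \<in> gen_of_parents ` lists (set_pmf ?P)"
    then obtain ps where "ps \<in> lists (set_pmf ?P)" and "y = gen_of_parents ps"
      by auto
    moreover have "ps \<noteq> [] \<Longrightarrow> Max (set ps) \<in> set ps"
      by simp
    ultimately show "y \<in> insert 0 (Suc ` set_pmf ?P)"
      by (auto simp: gen_of_parents_def)
  next
    fix y
    assume "y \<in> insert 0 (Suc ` set_pmf ?P)"
    then have "y = gen_of_parents [] \<or> (\<exists>z\<in>set_pmf ?P. y = gen_of_parents [z])"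
      by (auto simp: gen_of_parents_def)
    then show "y \<in> gen_of_parents ` lists (set_pmf ?P)"
      by fastforce
  qed
  finally show ?thesis .
qed

lemma clade_gen_Suc: "clade_gen rate \<alpha> G0 (Suc n) = new_member_gen rate \<alpha> (clade_gen rate \<alpha> G0 n)"
  by (simp add: clade_gen_def)

lemma finite_set_pmf_clade_gen:
  assumes "0 < rate" and "0 < \<alpha>" and "finite (set_pmf G0)"
  shows "finite (set_pmf (clade_gen rate \<alpha> G0 n))"
proof (induction n)
  case 0
  then show ?case
    using assms by (simp add: clade_gen_def)
next
  case (Suc n)
  then show ?case
    using assms by (simp add: clade_gen_Suc set_pmf_new_member_gen set_pmf_parent_gen_pmf)
qed

lemma lessThan_subset_set_pmf_clade_gen:
  assumes "0 < rate" and "0 < \<alpha>" and "finite (set_pmf G0)"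
  shows "{..<n} \<subseteq> set_pmf (clade_gen rate \<alpha> G0 n)"
proof (induction n)
  case 0
  then show ?case by simp
next
  case (Suc n)
  have "{..<Suc n} = insert 0 (Suc ` {..<n})"
    by (auto simp: lessThan_Suc_eq_insert_0)
  also have "\<dots> \<subseteq> set_pmf (clade_gen rate \<alpha> G0 (Suc n))"
    using Suc.IH assms
    by (auto simp: clade_gen_Suc set_pmf_new_member_gen set_pmf_parent_gen_pmf finite_set_pmf_clade_gen)
  finally show ?case .
qed

lemma measure_clade_gen_atMost_tendsto:
  assumes "0 < rate" and "0 < \<alpha>" and "\<alpha> < 1" and "finite (set_pmf G0)"
  shows "(\<lambda>n. measure_pmf.prob (clade_gen rate \<alpha> G0 n) {..k}) \<longlonglongrightarrow> exp (- rate * \<alpha> ^ k)"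
proof -
  have "(\<lambda>n. measure_pmf.prob (parent_gen_pmf \<alpha> (clade_gen rate \<alpha> G0 n)) {..<k}) \<longlonglongrightarrow> 1 - \<alpha> ^ k"
    using assms
    by (intro measure_parent_gen_pmf_lessThan_tendsto finite_set_pmf_clade_gen
        lessThan_subset_set_pmf_clade_gen)
  then have "(\<lambda>n. measure_pmf.prob (clade_gen rate \<alpha> G0 (Suc n)) {..k}) \<longlonglongrightarrow> exp (- rate * \<alpha> ^ k)"
    unfolding clade_gen_Suc measure_new_member_gen_atMost[OF assms(1)]
    by (auto intro!: tendsto_eq_intros)
  then show ?thesis
    by (rule LIMSEQ_imp_Suc)
qed

theorem theorem2:
  fixes rate \<alpha> :: real and G0 :: "nat pmf"
  assumes "rate > 0" and "0 < \<alpha>" and "\<alpha> < 1"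
    and "finite (set_pmf G0)"
  shows "\<forall>k. (\<lambda>n. pmf (clade_gen rate \<alpha> G0 n) k) \<longlonglongrightarrow> limit_gen_pmf rate \<alpha> k"
proof
  fix k
  let ?cdf = "\<lambda>n k. measure_pmf.prob (clade_gen rate \<alpha> G0 n) {..k}"
  have "(\<lambda>n. ?cdf n k - measure_pmf.prob (clade_gen rate \<alpha> G0 n) {..<k}) \<longlonglongrightarrow> limit_gen_pmf rate \<alpha> k"
  proof (cases k)
    case 0
    then show ?thesis
      using measure_clade_gen_atMost_tendsto[OF assms, of 0] by (simp add: limit_gen_pmf_def)
  next
    case (Suc m)
    have "(\<lambda>n. ?cdf n (Suc m) - ?cdf n m) \<longlonglongrightarrow> exp (- rate * \<alpha> ^ Suc m) - exp (- rate * \<alpha> ^ m)"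
      using assms by (intro tendsto_diff measure_clade_gen_atMost_tendsto)
    then show ?thesis
      by (simp add: Suc limit_gen_pmf_def lessThan_Suc_atMost)
  qed
  then show "(\<lambda>n. pmf (clade_gen rate \<alpha> G0 n) k) \<longlonglongrightarrow> limit_gen_pmf rate \<alpha> k"
    by (simp add: pmf_eq_measure_atMost_diff_lessThan)
qed

end
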